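(* Let $\mathcal{S}$ be a state space. Suppose there exists a state $s_0\in\mathcal{S}$ and a number $\lambda_0$ such that $e(s_0)=\lambda_0$ for all pure indecomposable effects $e$ on $\mathcal{S}$. Then $\lambda_{max}(\mathsf{M})=1/\lambda_0$ for every indecomposable measurement $\mathsf{M}$ on $\mathcal{S}$, and consequently $\lambda_{max}(\mathcal{S})=1/\lambda_0$.
   Context: General probabilistic theory setting: a state space $\mathcal{S}$ is a compact convex subset of a finite-dimensional real vector space, embedded as a base of a closed generating proper cone $V_+$ in a vector space $V$, so that $\mathcal{S}=\{x\in V_+ : u(x)=1\}$ for a strictly positive linear functional $u$ (the unit effect). An effect is a linear functional $e$ on $V$ with $0\le e(s)\le 1$ for all $s\in\mathcal{S}$; the set of effects is convex and its extreme points are called pure effects. A nonzero effect $e$ is indecomposable if whenever $e=e_1+e_2$ with $e_1,e_2$ nonzero effects, then $e=c_1e_1=c_2e_2$ for some $c_1,c_2>0$. For a linear functional $f$, $\|f\|=\max_{s\in\mathcal{S}}|f(s)|$. A measurement with finite outcome set $\Omega$ is a map $x\mapsto\mathsf{M}_x$ to effects with $\sum_x\mathsf{M}_x=u$; it is indecomposable if each of its nonzero effects is indecomposable. The decoding power is $\lambda_{max}(\mathsf{M})=\sum_x\|\mathsf{M}_x\|$, and the information storability of $\mathcal{S}$ is $\lambda_{max}(\mathcal{S})=\sup\{\lambda_{max}(\mathsf{M}) : \mathsf{M}$ a measurement on $\mathcal{S}$ with finite outcome set$\}$. *)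

theory Defs
  imports "HOL-Analysis.Analysis"
begin

text \<open>A state space: a compact convex nonempty set S in a finite-dimensional real
vector space V (type 'a), which is a base of the cone it generates:
there is a linear functional u (unit effect) with u = 1 on S, and S spans V
(so the cone V_+ = cone S is generating; it is then automatically closed and
proper since u > 0 on V_+ minus 0 and S is compact).\<close>
definition state_space :: "'a::euclidean_space set \<Rightarrow> ('a \<Rightarrow> real) \<Rightarrow> bool" where
  "state_space S u \<longleftrightarrow> S \<noteq> {} \<and> compact S \<and> convex S \<and> span S = UNIV
     \<and> linear u \<and> (\<forall>s\<in>S. u s = 1)"

definition effect :: "'a::euclidean_space set \<Rightarrow> ('a \<Rightarrow> real) \<Rightarrow> bool" where
  "effect S e \<longleftrightarrow> linear e \<and> (\<forall>s\<in>S. 0 \<le> e s \<and> e s \<le> 1)"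

definition pure_effect :: "'a::euclidean_space set \<Rightarrow> ('a \<Rightarrow> real) \<Rightarrow> bool" where
  "pure_effect S e \<longleftrightarrow> effect S e \<and>
     \<not> (\<exists>e1 e2 t. effect S e1 \<and> effect S e2 \<and> e1 \<noteq> e2 \<and> 0 < t \<and> t < 1 \<and>
            e = (\<lambda>v. t * e1 v + (1 - t) * e2 v))"

definition indecomposable_effect :: "'a::euclidean_space set \<Rightarrow> ('a \<Rightarrow> real) \<Rightarrow> bool" where
  "indecomposable_effect S e \<longleftrightarrow> effect S e \<and> e \<noteq> (\<lambda>_. 0) \<and>
     (\<forall>e1 e2. effect S e1 \<and> effect S e2 \<and> e1 \<noteq> (\<lambda>_. 0) \<and> e2 \<noteq> (\<lambda>_. 0)
        \<and> e = (\<lambda>v. e1 v + e2 v) \<longrightarrow>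
        (\<exists>c1 c2. c1 > 0 \<and> c2 > 0 \<and> e = (\<lambda>v. c1 * e1 v) \<and> e = (\<lambda>v. c2 * e2 v)))"

definition measurement ::
  "'a::euclidean_space set \<Rightarrow> ('a \<Rightarrow> real) \<Rightarrow> 'b set \<Rightarrow> ('b \<Rightarrow> 'a \<Rightarrow> real) \<Rightarrow> bool" where
  "measurement S u \<Omega> M \<longleftrightarrow> finite \<Omega> \<and> (\<forall>x\<in>\<Omega>. effect S (M x)) \<and>
     (\<forall>v. (\<Sum>x\<in>\<Omega>. M x v) = u v)"

definition indecomposable_measurement ::
  "'a::euclidean_space set \<Rightarrow> ('a \<Rightarrow> real) \<Rightarrow> 'b set \<Rightarrow> ('b \<Rightarrow> 'a \<Rightarrow> real) \<Rightarrow> bool" where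
  "indecomposable_measurement S u \<Omega> M \<longleftrightarrow> measurement S u \<Omega> M \<and>
     (\<forall>x\<in>\<Omega>. M x \<noteq> (\<lambda>_. 0) \<longrightarrow> indecomposable_effect S (M x))"

definition fnorm :: "'a set \<Rightarrow> ('a \<Rightarrow> real) \<Rightarrow> real" where
  "fnorm S f = (SUP s\<in>S. \<bar>f s\<bar>)"

definition decoding_power :: "'a set \<Rightarrow> 'b set \<Rightarrow> ('b \<Rightarrow> 'a \<Rightarrow> real) \<Rightarrow> real" where
  "decoding_power S \<Omega> M = (\<Sum>x\<in>\<Omega>. fnorm S (M x))"

text \<open>Information storability; finite outcome sets are taken as finite subsets of nat
(every finite outcome set is in bijection with one).\<close>
definition info_storability :: "'a::euclidean_space set \<Rightarrow> ('a \<Rightarrow> real) \<Rightarrow> real" where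
  "info_storability S u = Sup {decoding_power S \<Omega> M | (\<Omega> :: nat set) M. measurement S u \<Omega> M}"

end

theory Submission
  imports Defs
begin

text \<open>Effects are the vectors w of the dual cone of S with w \<bullet> s \<le> 1 on S. The dual cone has a
compact base, so by Krein-Milman every effect is a nonnegative combination of extreme points w of
the base, i.e. of extreme rays. Each extreme ray is spanned by the pure indecomposable effect
w / h(w), where h is the support function of S, so the hypothesis says w \<bullet> s0 = lam0 * h(w).
Summing over the extreme rays, every effect e satisfies e(s) \<le> e(s0) / lam0 on S, hence
fnorm e \<le> e(s0) / lam0, with equality for indecomposable e, which lie on a single extreme ray.
Summing over the outcomes of a measurement bounds its decoding power by u(s0) / lam0 = 1 / lam0,
with equality for indecomposable measurements; these exist because u itself decomposes along
extreme rays.\<close>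

definition dual_cone :: "'a::real_inner set \<Rightarrow> 'a set" where
  "dual_cone S = {w. \<forall>s\<in>S. 0 \<le> w \<bullet> s}"

lemma dual_cone_scaleR: "w \<in> dual_cone S \<Longrightarrow> 0 \<le> a \<Longrightarrow> a *\<^sub>R w \<in> dual_cone S"
  by (simp add: dual_cone_def)

lemma dual_cone_sum:
  "(\<And>x. x \<in> F \<Longrightarrow> f x \<in> dual_cone S) \<Longrightarrow> (\<Sum>x\<in>F. f x) \<in> dual_cone S"
  by (induction F rule: infinite_finite_induct)
     (auto simp: dual_cone_def inner_add_left)

lemma closed_dual_cone: "closed (dual_cone S)"
proof -
  have "dual_cone S = (\<Inter>s\<in>S. {w. 0 \<le> w \<bullet> s})"
    by (auto simp: dual_cone_def)
  then show ?thesis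
    by (simp add: closed_INT closed_Collect_le continuous_on_inner)
qed

lemma convex_dual_cone: "convex (dual_cone S)"
  by (auto simp: convex_def dual_cone_def inner_add_left)

lemma linear_functional_eq_inner:
  fixes f :: "'a::euclidean_space \<Rightarrow> real"
  assumes "linear f"
  shows "f = (\<lambda>v. adjoint f 1 \<bullet> v)"
proof
  fix v
  show "f v = adjoint f 1 \<bullet> v"
    using adjoint_works[OF assms, of v 1] by (simp only: inner_commute inner_real_def mult_1_right)
qed

lemma effect_iff_inner:
  "effect S e \<longleftrightarrow> (\<exists>w\<in>dual_cone S. e = (\<lambda>v. w \<bullet> v) \<and> (\<forall>s\<in>S. w \<bullet> s \<le> 1))"
proof
  assume e: "effect S e"
  define w where "w = adjoint e 1"
  have e_eq: "e = (\<lambda>v. w \<bullet> v)"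
    using e unfolding w_def effect_def by (intro linear_functional_eq_inner) simp
  moreover have "w \<in> dual_cone S" "\<forall>s\<in>S. w \<bullet> s \<le> 1"
    using e unfolding effect_def dual_cone_def e_eq by auto
  ultimately show "\<exists>w\<in>dual_cone S. e = (\<lambda>v. w \<bullet> v) \<and> (\<forall>s\<in>S. w \<bullet> s \<le> 1)"
    by blast
qed (auto simp: effect_def dual_cone_def intro: bounded_linear.linear[OF bounded_linear_inner_right])

lemma effect_scaled_inner:
  "w \<in> dual_cone S \<Longrightarrow> 0 \<le> a \<Longrightarrow> (\<forall>s\<in>S. a * (w \<bullet> s) \<le> 1) \<Longrightarrow>
    effect S (\<lambda>v. a * (w \<bullet> v))"
  by (auto simp: effect_def dual_cone_def linear_iff inner_add_right algebra_simps)

lemma effect_inner_summand: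
  assumes "effect S (\<lambda>v. (x + y) \<bullet> v)" "x \<in> dual_cone S" "y \<in> dual_cone S"
  shows "effect S (\<lambda>v. x \<bullet> v)"
proof -
  have "x \<bullet> s \<le> 1" if "s \<in> S" for s
  proof -
    have "x \<bullet> s + y \<bullet> s \<le> 1" "0 \<le> y \<bullet> s"
      using assms that by (simp_all add: effect_def dual_cone_def inner_add_left)
    then show ?thesis
      by linarith
  qed
  with assms(2) show ?thesis
    unfolding effect_iff_inner by blast
qed

lemma inner_fun_eq_0_iff: "(\<lambda>v. w \<bullet> v) = (\<lambda>_. 0) \<longleftrightarrow> w = 0"
  by (metis inner_eq_zero_iff inner_zero_left)

lemma bounded_if_inner_bounded_on_spanning:
  fixes B :: "'a::euclidean_space set"
  assumes "finite B" "span B = UNIV"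
    and bound: "\<And>w b. w \<in> W \<Longrightarrow> b \<in> B \<Longrightarrow> \<bar>w \<bullet> b\<bar> \<le> 1"
  shows "bounded W"
proof -
  have "\<forall>i\<in>Basis. \<exists>r. i = (\<Sum>b\<in>B. r b *\<^sub>R b)"
    using assms(2) span_finite[OF assms(1)] by blast
  then obtain r where r: "\<And>i. i \<in> Basis \<Longrightarrow> i = (\<Sum>b\<in>B. r i b *\<^sub>R b)"
    by (meson bchoice)
  have "\<bar>w \<bullet> i\<bar> \<le> (\<Sum>b\<in>B. \<bar>r i b\<bar>)" if "w \<in> W" "i \<in> Basis" for w i
  proof -
    from r[OF \<open>i \<in> Basis\<close>] have "w \<bullet> i = w \<bullet> (\<Sum>b\<in>B. r i b *\<^sub>R b)"
      by (rule arg_cong)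
    then have "\<bar>w \<bullet> i\<bar> = \<bar>\<Sum>b\<in>B. r i b * (w \<bullet> b)\<bar>"
      by (simp add: inner_sum_right)
    also have "\<dots> \<le> (\<Sum>b\<in>B. \<bar>r i b\<bar> * \<bar>w \<bullet> b\<bar>)"
      by (rule order_trans[OF sum_abs]) (simp add: abs_mult)
    also have "\<dots> \<le> (\<Sum>b\<in>B. \<bar>r i b\<bar>)"
      using bound[OF \<open>w \<in> W\<close>] by (intro sum_mono) (simp add: mult_left_le)
    finally show ?thesis .
  qed
  then have "norm w \<le> (\<Sum>i\<in>Basis. \<Sum>b\<in>B. \<bar>r i b\<bar>)" if "w \<in> W" for w
    using that by (intro order_trans[OF norm_le_l1] sum_mono)
  then show ?thesis
    unfolding bounded_iff by blast
qed

locale cone_base =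
  fixes S :: "'a::euclidean_space set" and B :: "'a set"
  assumes B_subset: "B \<subseteq> S" and finite_B: "finite B" and span_B: "span B = UNIV"
begin

definition center :: 'a where
  "center = \<Sum>B"

definition base :: "'a set" where
  "base = {w \<in> dual_cone S. w \<bullet> center = 1}"

lemma inner_center: "w \<bullet> center = (\<Sum>b\<in>B. w \<bullet> b)"
  by (simp add: center_def inner_sum_right)

lemma dual_cone_inner_center_nonneg: "w \<in> dual_cone S \<Longrightarrow> 0 \<le> w \<bullet> center"
  using B_subset by (auto simp: inner_center dual_cone_def intro!: sum_nonneg)

lemma dual_cone_inner_center_eq_0:
  assumes "w \<in> dual_cone S" "w \<bullet> center = 0"
  shows "w = 0"
proof -
  have "\<forall>b\<in>B. w \<bullet> b = 0"
    using assms B_subset finite_B by (simp add: inner_center dual_cone_def sum_nonneg_eq_0_iff subset_iff)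
  then have "orthogonal w w"
    using span_B by (intro orthogonal_to_span[of w B]) (auto simp: orthogonal_def)
  then show ?thesis
    by (simp add: orthogonal_def)
qed

lemma base_eq: "base = dual_cone S \<inter> {w. center \<bullet> w = 1}"
  by (auto simp: base_def inner_commute)

lemma convex_base: "convex base"
  by (simp add: base_eq convex_Int convex_dual_cone convex_hyperplane)

lemma compact_base: "compact base"
proof (rule compact_eq_bounded_closed[THEN iffD2], rule conjI)
  show "bounded base"
  proof (rule bounded_if_inner_bounded_on_spanning[OF finite_B span_B])
    fix w b assume "w \<in> base" "b \<in> B"
    then have nonneg: "\<forall>b\<in>B. 0 \<le> w \<bullet> b" and "(\<Sum>b\<in>B. w \<bullet> b) = 1"
      using B_subset by (auto simp: base_def dual_cone_def inner_center)
    moreover have "w \<bullet> b \<le> (\<Sum>b\<in>B. w \<bullet> b)"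
      using nonneg \<open>b \<in> B\<close> finite_B by (intro member_le_sum) auto
    ultimately show "\<bar>w \<bullet> b\<bar> \<le> 1"
      using \<open>b \<in> B\<close> by simp
  qed
  show "closed base"
    by (simp add: base_eq closed_Int closed_dual_cone closed_hyperplane)
qed

lemma extreme_point_in_dual_cone: "w extreme_point_of base \<Longrightarrow> w \<in> dual_cone S"
  and extreme_point_inner_center: "w extreme_point_of base \<Longrightarrow> w \<bullet> center = 1"
  by (simp_all add: extreme_point_of_def base_def)

lemma base_inner_pos:
  assumes "w \<in> base"
  obtains s where "s \<in> S" "0 < w \<bullet> s"
proof -
  have "(\<Sum>b\<in>B. w \<bullet> b) = 1"
    using assms by (simp add: base_def inner_center)
  then obtain b where "b \<in> B" "0 < w \<bullet> b"
    by (metis not_le sum_nonpos zero_less_one)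
  with B_subset that show ?thesis
    by blast
qed

lemma dual_cone_extreme_decomposition:
  assumes "v \<in> dual_cone S"
  obtains F \<kappa> where "finite F" "F \<subseteq> {w. w extreme_point_of base}" "\<forall>x\<in>F. 0 \<le> \<kappa> x"
    "v = (\<Sum>x\<in>F. \<kappa> x *\<^sub>R x)"
proof (cases "v \<bullet> center = 0")
  case True
  with assms have "v = 0"
    by (rule dual_cone_inner_center_eq_0)
  then show ?thesis
    by (intro that[of "{}"]) auto
next
  case False
  define a where "a = v \<bullet> center"
  have "0 < a"
    using False dual_cone_inner_center_nonneg[OF assms] by (simp add: a_def)
  then have "(1 / a) *\<^sub>R v \<in> base"
    using assms by (simp add: base_def dual_cone_scaleR a_def)
  then have "(1 / a) *\<^sub>R v \<in> convex hull {w. w extreme_point_of base}"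
    by (rule subsetD[OF eq_refl[OF Krein_Milman_Minkowski[OF compact_base convex_base]]])
  then obtain F \<mu> where F: "finite F" "F \<subseteq> {w. w extreme_point_of base}"
    "\<forall>x\<in>F. 0 \<le> \<mu> x" "(\<Sum>x\<in>F. \<mu> x *\<^sub>R x) = (1 / a) *\<^sub>R v"
    unfolding convex_hull_explicit by blast
  have "v = a *\<^sub>R (\<Sum>x\<in>F. \<mu> x *\<^sub>R x)"
    using \<open>0 < a\<close> by (simp add: F(4))
  also have "\<dots> = (\<Sum>x\<in>F. (a * \<mu> x) *\<^sub>R x)"
    by (simp add: scaleR_sum_right)
  finally show ?thesis
    using F(1-3) \<open>0 < a\<close> by (intro that[of F "\<lambda>x. a * \<mu> x"]) auto
qed

lemma extreme_ray_summand:
  assumes w: "w extreme_point_of base" and x: "x \<in> dual_cone S" and y: "y \<in> dual_cone S"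
    and sum: "x + y = a *\<^sub>R w"
  shows "x = (x \<bullet> center) *\<^sub>R w"
proof -
  have w_base: "w \<in> base"
    and no_segment: "\<And>x' y'. x' \<in> base \<Longrightarrow> y' \<in> base \<Longrightarrow> w \<notin> open_segment x' y'"
    using w by (auto simp: extreme_point_of_def)
  define p q where "p = x \<bullet> center" and "q = y \<bullet> center"
  have "p + q = a"
    using arg_cong[OF sum, of "\<lambda>z. z \<bullet> center"] w_base by (simp add: inner_add_left base_def p_def q_def)
  have "0 \<le> p" "0 \<le> q"
    using dual_cone_inner_center_nonneg x y by (simp_all add: p_def q_def)
  then consider "p = 0" | "q = 0" | "0 < p" "0 < q"
    by linarith
  then show ?thesis
  proof cases
    case 1
    then show ?thesis
      using dual_cone_inner_center_eq_0[OF x] by (simp add: p_def)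
  next
    case 2
    then have "x = a *\<^sub>R w"
      using dual_cone_inner_center_eq_0[OF y] sum by (simp add: q_def)
    then show ?thesis
      using \<open>p + q = a\<close> 2 by (simp add: p_def)
  next
    case 3
    define x' y' where "x' = (1 / p) *\<^sub>R x" and "y' = (1 / q) *\<^sub>R y"
    have "x' \<in> base" "y' \<in> base"
      using 3 x y by (simp_all add: base_def dual_cone_scaleR x'_def y'_def p_def q_def)
    have "w = (1 - q / a) *\<^sub>R x' + (q / a) *\<^sub>R y'"
    proof -
      have "1 - q / a = p / a"
        using 3 \<open>p + q = a\<close> by (simp add: field_simps)
      then have "(1 - q / a) *\<^sub>R x' + (q / a) *\<^sub>R y' = (1 / a) *\<^sub>R (x + y)"
        using 3 by (simp add: x'_def y'_def scaleR_add_right)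
      then show ?thesis
        using sum 3 \<open>p + q = a\<close> by simp
    qed
    moreover have "0 < q / a" "q / a < 1"
      using 3 \<open>p + q = a\<close> by auto
    ultimately have "x' = y'"
      using no_segment[OF \<open>x' \<in> base\<close> \<open>y' \<in> base\<close>] unfolding in_segment(2) by blast
    with \<open>w = (1 - q / a) *\<^sub>R x' + (q / a) *\<^sub>R y'\<close> have "w = x'"
      by (simp add: scaleR_left_diff_distrib)
    then show ?thesis
      using 3 by (simp add: x'_def p_def)
  qed
qed


lemma dual_cone_extreme_summand:
  assumes "v \<in> dual_cone S" "v \<noteq> 0"
  obtains w b r where "w extreme_point_of base" "0 < b" "r \<in> dual_cone S" "v = b *\<^sub>R w + r"
proof -
  obtain F \<kappa> where F: "finite F" "F \<subseteq> {w. w extreme_point_of base}" "\<forall>x\<in>F. 0 \<le> \<kappa> x"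
    and v_sum: "v = (\<Sum>x\<in>F. \<kappa> x *\<^sub>R x)"
    using dual_cone_extreme_decomposition[OF assms(1)] by blast
  with assms(2) obtain w where "w \<in> F" "\<kappa> w \<noteq> 0"
    by (metis (mono_tags, lifting) scaleR_zero_left sum.neutral)
  have "(\<Sum>x\<in>F - {w}. \<kappa> x *\<^sub>R x) \<in> dual_cone S"
    using F(2,3) by (intro dual_cone_sum dual_cone_scaleR) (auto intro: extreme_point_in_dual_cone)
  moreover have "v = \<kappa> w *\<^sub>R w + (\<Sum>x\<in>F - {w}. \<kappa> x *\<^sub>R x)"
    unfolding v_sum by (rule sum.remove[OF F(1) \<open>w \<in> F\<close>])
  moreover have "w extreme_point_of base" "0 < \<kappa> w"
    using \<open>w \<in> F\<close> \<open>\<kappa> w \<noteq> 0\<close> F(2,3) by (auto simp: less_le)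
  ultimately show ?thesis
    using that by blast
qed

lemma extreme_ray_summand_scaled:
  assumes w: "w extreme_point_of base" and x: "x \<in> dual_cone S" and y: "y \<in> dual_cone S"
    and "0 < t" and sum: "t *\<^sub>R x + y = a *\<^sub>R w"
  shows "x = (x \<bullet> center) *\<^sub>R w"
proof -
  have "t *\<^sub>R x = (t *\<^sub>R x \<bullet> center) *\<^sub>R w"
    using x \<open>0 < t\<close> by (intro extreme_ray_summand[OF w _ y sum]) (simp add: dual_cone_scaleR)
  then have "t *\<^sub>R x = t *\<^sub>R ((x \<bullet> center) *\<^sub>R w)"
    by simp
  with \<open>0 < t\<close> show ?thesis
    by (metis scaleR_cancel_left less_irrefl)
qed
lemma extreme_ray_effect_summand:
  assumes w: "w extreme_point_of base" and "0 < a" and e1: "effect S e1" and e2: "effect S e2"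
    and nonzero: "e1 \<noteq> (\<lambda>_. 0)" and sum: "(\<lambda>v. a * (w \<bullet> v)) = (\<lambda>v. e1 v + e2 v)"
  shows "\<exists>c>0. (\<lambda>v. a * (w \<bullet> v)) = (\<lambda>v. c * e1 v)"
proof -
  obtain x y where x: "x \<in> dual_cone S" "e1 = (\<lambda>v. x \<bullet> v)"
    and y: "y \<in> dual_cone S" "e2 = (\<lambda>v. y \<bullet> v)"
    using e1 e2 by (auto simp: effect_iff_inner)
  have "\<forall>v. (x + y) \<bullet> v = (a *\<^sub>R w) \<bullet> v"
    using sum by (simp add: x y inner_add_left fun_eq_iff)
  then have "x + y = a *\<^sub>R w"
    by (simp only: vector_eq_rdot)
  then have x_ray: "x = (x \<bullet> center) *\<^sub>R w"
    by (rule extreme_ray_summand[OF w x(1) y(1)])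
  have "x \<noteq> 0"
    using nonzero x(2) inner_fun_eq_0_iff by blast
  with x_ray have "x \<bullet> center \<noteq> 0"
    by (metis scaleR_zero_left)
  then have "0 < x \<bullet> center"
    using dual_cone_inner_center_nonneg[OF x(1)] by linarith
  moreover have "e1 v = (x \<bullet> center) * (w \<bullet> v)" for v
    using arg_cong[OF x_ray, of "\<lambda>z. z \<bullet> v"] by (simp add: x(2))
  ultimately show ?thesis
    using \<open>0 < a\<close> by (intro exI[of _ "a / (x \<bullet> center)"]) (simp add: fun_eq_iff)
qed

end

definition support_function :: "'a::real_inner set \<Rightarrow> 'a \<Rightarrow> real" where
  "support_function S w = (SUP s\<in>S. w \<bullet> s)"

lemma support_function_attained:
  assumes "compact S" "S \<noteq> {}"
  obtains s where "s \<in> S" "support_function S w = w \<bullet> s"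
    "\<And>t. t \<in> S \<Longrightarrow> w \<bullet> t \<le> support_function S w"
proof -
  obtain s where s: "s \<in> S" "\<And>t. t \<in> S \<Longrightarrow> w \<bullet> t \<le> w \<bullet> s"
    using continuous_attains_sup[OF assms continuous_on_inner[OF continuous_on_const continuous_on_id]]
    by blast
  then have "support_function S w = w \<bullet> s"
    unfolding support_function_def by (intro cSup_eq_maximum) auto
  with s that show ?thesis
    by simp
qed

lemma abs_le_fnorm: "bdd_above ((\<lambda>s. \<bar>f s\<bar>) ` S) \<Longrightarrow> s \<in> S \<Longrightarrow> \<bar>f s\<bar> \<le> fnorm S f"
  unfolding fnorm_def by (rule cSUP_upper)

lemma fnorm_le: "S \<noteq> {} \<Longrightarrow> (\<And>s. s \<in> S \<Longrightarrow> \<bar>f s\<bar> \<le> C) \<Longrightarrow> fnorm S f \<le> C"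
  unfolding fnorm_def by (rule cSUP_least)

lemma effect_le_fnorm: "effect S e \<Longrightarrow> s \<in> S \<Longrightarrow> e s \<le> fnorm S e"
  by (rule order_trans[OF abs_ge_self abs_le_fnorm]) (auto simp: effect_def bdd_above_def)

lemma indecomposable_measurement_reindex:
  assumes "bij_betw h A \<Omega>" "indecomposable_measurement S u \<Omega> M"
  shows "indecomposable_measurement S u A (M \<circ> h)"
proof -
  have "finite A"
    using assms by (simp add: bij_betw_finite indecomposable_measurement_def measurement_def)
  moreover have "(\<Sum>x\<in>A. (M \<circ> h) x v) = (\<Sum>y\<in>\<Omega>. M y v)" for v
    using sum.reindex_bij_betw[OF assms(1), of "\<lambda>y. M y v"] by simp
  ultimately show ?thesis
    using assms bij_betwE[OF assms(1)]
    by (auto simp: indecomposable_measurement_def measurement_def)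
qed

locale state_space_basis = cone_base S B for S :: "'a::euclidean_space set" and B +
  fixes u :: "'a \<Rightarrow> real"
  assumes state_space: "state_space S u"
begin

lemma S_nonempty: "S \<noteq> {}" and compact_S: "compact S" and effect_unit: "effect S u"
  and unit_eq_1: "s \<in> S \<Longrightarrow> u s = 1"
  using state_space by (auto simp: state_space_def effect_def)

lemma support_function_pos: "w \<in> base \<Longrightarrow> 0 < support_function S w"
  by (metis base_inner_pos support_function_attained[OF compact_S S_nonempty] order.strict_trans2)

lemma extreme_ray_indecomposable:
  assumes w: "w extreme_point_of base" and "0 < a" and le1: "\<forall>s\<in>S. a * (w \<bullet> s) \<le> 1"
  shows "indecomposable_effect S (\<lambda>v. a * (w \<bullet> v))"
proof -
  have "w \<noteq> 0"
    using extreme_point_inner_center[OF w] by auto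
  then have nonzero: "(\<lambda>v. a * (w \<bullet> v)) \<noteq> (\<lambda>_. 0)"
    using inner_fun_eq_0_iff[of "a *\<^sub>R w"] \<open>0 < a\<close> by simp
  show ?thesis
    unfolding indecomposable_effect_def
  proof (intro conjI nonzero allI impI)
    show "effect S (\<lambda>v. a * (w \<bullet> v))"
      using extreme_point_in_dual_cone[OF w] \<open>0 < a\<close> le1 by (simp add: effect_scaled_inner)
    fix e1 e2
    assume "effect S e1 \<and> effect S e2 \<and> e1 \<noteq> (\<lambda>_. 0) \<and> e2 \<noteq> (\<lambda>_. 0) \<and>
      (\<lambda>v. a * (w \<bullet> v)) = (\<lambda>v. e1 v + e2 v)"
    moreover from this have "(\<lambda>v. a * (w \<bullet> v)) = (\<lambda>v. e2 v + e1 v)"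
      by (simp add: add.commute)
    ultimately show "\<exists>c1 c2. 0 < c1 \<and> 0 < c2 \<and> (\<lambda>v. a * (w \<bullet> v)) = (\<lambda>v. c1 * e1 v) \<and>
      (\<lambda>v. a * (w \<bullet> v)) = (\<lambda>v. c2 * e2 v)"
      using extreme_ray_effect_summand[OF w \<open>0 < a\<close>] by blast
  qed
qed

lemma extreme_ray_pure:
  assumes w: "w extreme_point_of base" and "0 < a" and le1: "\<forall>s\<in>S. a * (w \<bullet> s) \<le> 1"
    and s1: "s1 \<in> S" "a * (w \<bullet> s1) = 1"
  shows "pure_effect S (\<lambda>v. a * (w \<bullet> v))"
  unfolding pure_effect_def
proof (intro conjI notI)
  show "effect S (\<lambda>v. a * (w \<bullet> v))"
    using extreme_point_in_dual_cone[OF w] \<open>0 < a\<close> le1 by (simp add: effect_scaled_inner)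
  assume "\<exists>e1 e2 t. effect S e1 \<and> effect S e2 \<and> e1 \<noteq> e2 \<and> 0 < t \<and> t < 1 \<and>
    (\<lambda>v. a * (w \<bullet> v)) = (\<lambda>v. t * e1 v + (1 - t) * e2 v)"
  then obtain e1 e2 t where e1: "effect S e1" and e2: "effect S e2" and "e1 \<noteq> e2" "0 < t" "t < 1"
    and mix: "(\<lambda>v. a * (w \<bullet> v)) = (\<lambda>v. t * e1 v + (1 - t) * e2 v)"
    by blast
  obtain x y where x: "x \<in> dual_cone S" "e1 = (\<lambda>v. x \<bullet> v)" "\<forall>s\<in>S. x \<bullet> s \<le> 1"
    and y: "y \<in> dual_cone S" "e2 = (\<lambda>v. y \<bullet> v)" "\<forall>s\<in>S. y \<bullet> s \<le> 1"
    using e1 e2 by (auto simp: effect_iff_inner)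
  have "\<forall>v. (t *\<^sub>R x + (1 - t) *\<^sub>R y) \<bullet> v = (a *\<^sub>R w) \<bullet> v"
    using mix by (simp add: x y inner_add_left fun_eq_iff)
  then have sum: "t *\<^sub>R x + (1 - t) *\<^sub>R y = a *\<^sub>R w"
    by (simp only: vector_eq_rdot)
  have tx: "t *\<^sub>R x \<in> dual_cone S" and ty: "(1 - t) *\<^sub>R y \<in> dual_cone S"
    using x y \<open>t < 1\<close> \<open>0 < t\<close> by (simp_all add: dual_cone_scaleR)
  from sum have sum': "(1 - t) *\<^sub>R y + t *\<^sub>R x = a *\<^sub>R w"
    by (simp add: add.commute)
  have x_ray: "x = (x \<bullet> center) *\<^sub>R w"
    using \<open>0 < t\<close> by (rule extreme_ray_summand_scaled[OF w x(1) ty _ sum])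
  have y_ray: "y = (y \<bullet> center) *\<^sub>R w"
    using \<open>t < 1\<close> by (intro extreme_ray_summand_scaled[OF w y(1) tx _ sum']) simp
  have "0 < w \<bullet> s1"
    using s1(2) \<open>0 < a\<close> zero_less_mult_iff[of a "w \<bullet> s1"] by simp
  moreover have "(x \<bullet> center) * (w \<bullet> s1) \<le> a * (w \<bullet> s1)"
    and "(y \<bullet> center) * (w \<bullet> s1) \<le> a * (w \<bullet> s1)"
    using x(3) y(3) s1 arg_cong[OF x_ray, of "\<lambda>z. z \<bullet> s1"] arg_cong[OF y_ray, of "\<lambda>z. z \<bullet> s1"]
    by auto
  ultimately have "t * (x \<bullet> center) \<le> t * a" "(1 - t) * (y \<bullet> center) \<le> (1 - t) * a"
    using \<open>0 < t\<close> \<open>t < 1\<close> by (simp_all add: mult_le_cancel_right_pos)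
  moreover have "t * (x \<bullet> center) + (1 - t) * (y \<bullet> center) = t * a + (1 - t) * a"
    using arg_cong[OF sum, of "\<lambda>z. z \<bullet> center"] extreme_point_inner_center[OF w]
    by (simp add: inner_add_left algebra_simps)
  ultimately have "t * (x \<bullet> center) = t * a" "(1 - t) * (y \<bullet> center) = (1 - t) * a"
    by linarith+
  then have "x \<bullet> center = a" "y \<bullet> center = a"
    using \<open>0 < t\<close> \<open>t < 1\<close> by simp_all
  then have "x = y"
    using x_ray y_ray by metis
  with \<open>e1 \<noteq> e2\<close> x(2) y(2) show False
    by simp
qed

lemma indecomposable_effect_on_extreme_ray:
  assumes e: "indecomposable_effect S e"
  obtains w b where "w extreme_point_of base" "0 < b" "e = (\<lambda>v. b * (w \<bullet> v))"
proof -
  have "effect S e" and "e \<noteq> (\<lambda>_. 0)"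
    using e unfolding indecomposable_effect_def by blast+
  then obtain v where v: "v \<in> dual_cone S" "e = (\<lambda>x. v \<bullet> x)"
    unfolding effect_iff_inner by blast
  with \<open>e \<noteq> (\<lambda>_. 0)\<close> have "v \<noteq> 0"
    using inner_fun_eq_0_iff by blast
  then obtain w b r where w: "w extreme_point_of base" and "0 < b" and r: "r \<in> dual_cone S"
    and v_split: "v = b *\<^sub>R w + r"
    using dual_cone_extreme_summand[OF v(1)] by blast
  have bw: "b *\<^sub>R w \<in> dual_cone S"
    using extreme_point_in_dual_cone[OF w] \<open>0 < b\<close> by (simp add: dual_cone_scaleR)
  have e_split: "e = (\<lambda>x. b * (w \<bullet> x) + r \<bullet> x)"
    by (simp add: v v_split inner_add_left)
  show ?thesis
  proof (cases "r = 0")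
    case True
    with e_split show ?thesis
      using that[OF w \<open>0 < b\<close>] by simp
  next
    case False
    have sum_effect: "effect S (\<lambda>x. (b *\<^sub>R w + r) \<bullet> x)"
      using \<open>effect S e\<close> by (simp only: v(2) v_split)
    then have "effect S (\<lambda>x. (b *\<^sub>R w) \<bullet> x)"
      by (rule effect_inner_summand[OF _ bw r])
    moreover have "effect S (\<lambda>x. r \<bullet> x)"
      using sum_effect by (intro effect_inner_summand[OF _ r bw]) (simp only: add.commute)
    moreover have "(\<lambda>x. (b *\<^sub>R w) \<bullet> x) \<noteq> (\<lambda>_. 0)" "(\<lambda>x. r \<bullet> x) \<noteq> (\<lambda>_. 0)"
      unfolding inner_fun_eq_0_iff using False \<open>0 < b\<close> extreme_point_inner_center[OF w] by auto
    moreover have "\<And>e1 e2. effect S e1 \<Longrightarrow> effect S e2 \<Longrightarrow> e1 \<noteq> (\<lambda>_. 0) \<Longrightarrow>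
        e2 \<noteq> (\<lambda>_. 0) \<Longrightarrow> e = (\<lambda>v. e1 v + e2 v) \<Longrightarrow> \<exists>c>0. e = (\<lambda>v. c * e1 v)"
      using e unfolding indecomposable_effect_def by blast
    moreover have "e = (\<lambda>x. (b *\<^sub>R w) \<bullet> x + r \<bullet> x)"
      by (simp add: e_split)
    ultimately obtain c where "0 < c" "e = (\<lambda>x. c * ((b *\<^sub>R w) \<bullet> x))"
      by blast
    then show ?thesis
      using that[OF w, of "c * b"] \<open>0 < b\<close> by (simp add: mult.assoc)
  qed
qed

lemma exists_indecomposable_measurement:
  obtains F and M :: "'a \<Rightarrow> 'a \<Rightarrow> real" where "indecomposable_measurement S u F M"
proof -
  obtain z where z: "z \<in> dual_cone S" "u = (\<lambda>v. z \<bullet> v)"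
    using effect_unit by (auto simp: effect_iff_inner)
  obtain F \<kappa> where F: "finite F" "F \<subseteq> {w. w extreme_point_of base}" "\<forall>x\<in>F. 0 \<le> \<kappa> x"
    and z_sum: "z = (\<Sum>x\<in>F. \<kappa> x *\<^sub>R x)"
    using dual_cone_extreme_decomposition[OF z(1)] by blast
  define M where "M x = (\<lambda>v. \<kappa> x * (x \<bullet> v))" for x
  have sum: "(\<Sum>x\<in>F. M x v) = u v" for v
    by (simp add: M_def z z_sum inner_sum_left)
  have nonneg: "0 \<le> M x s" if "x \<in> F" "s \<in> S" for x s
    using F(2,3) extreme_point_in_dual_cone that by (auto simp: M_def dual_cone_def)
  have le1: "\<forall>s\<in>S. M x s \<le> 1" if "x \<in> F" for x
  proof
    fix s assume "s \<in> S"
    then have "M x s \<le> (\<Sum>y\<in>F. M y s)"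
      using F(1) nonneg that by (intro member_le_sum) auto
    with \<open>s \<in> S\<close> show "M x s \<le> 1"
      by (simp add: sum unit_eq_1)
  qed
  have "effect S (M x)" if "x \<in> F" for x
    using le1[OF that] F(2,3) extreme_point_in_dual_cone that by (auto simp: M_def effect_scaled_inner)
  moreover have "indecomposable_effect S (M x)" if "x \<in> F" "M x \<noteq> (\<lambda>_. 0)" for x
  proof -
    have "0 < \<kappa> x"
      using that F(3) by (fastforce simp: M_def less_le)
    then show ?thesis
      using le1[OF that(1)] F(2) that(1) unfolding M_def by (auto intro: extreme_ray_indecomposable)
  qed
  ultimately show ?thesis
    using that[of F M] F(1) sum by (auto simp: indecomposable_measurement_def measurement_def)
qed

end

locale uniform_pure_indecomposable = state_space_basis +
  fixes s0 :: 'a and lam0 :: real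
  assumes s0_in_S: "s0 \<in> S"
    and pure_indecomposable_at_s0: "\<And>e. pure_effect S e \<Longrightarrow> indecomposable_effect S e \<Longrightarrow> e s0 = lam0"
begin

lemma extreme_point_inner_s0:
  assumes w: "w extreme_point_of base"
  shows "w \<bullet> s0 = lam0 * support_function S w"
proof -
  define m where "m = support_function S w"
  obtain s1 where s1: "s1 \<in> S" "m = w \<bullet> s1" "\<And>t. t \<in> S \<Longrightarrow> w \<bullet> t \<le> m"
    using support_function_attained[OF compact_S S_nonempty, of w] unfolding m_def by blast
  have "0 < m"
    using support_function_pos w by (simp add: m_def extreme_point_of_def)
  then have "\<forall>s\<in>S. (1 / m) * (w \<bullet> s) \<le> 1" "(1 / m) * (w \<bullet> s1) = 1"
    using s1 by (simp_all add: field_simps)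
  then have "(1 / m) * (w \<bullet> s0) = lam0"
    using \<open>0 < m\<close> by (intro pure_indecomposable_at_s0 extreme_ray_pure[OF w _ _ s1(1)]
        extreme_ray_indecomposable[OF w]) simp_all
  with \<open>0 < m\<close> show ?thesis
    by (simp add: m_def field_simps)
qed

lemma dual_cone_bounded_at_s0:
  assumes "v \<in> dual_cone S"
  obtains k where "0 \<le> k" "v \<bullet> s0 = lam0 * k" "\<And>s. s \<in> S \<Longrightarrow> v \<bullet> s \<le> k"
proof -
  obtain F \<kappa> where F: "finite F" "F \<subseteq> {w. w extreme_point_of base}" "\<forall>x\<in>F. 0 \<le> \<kappa> x"
    and v_sum: "v = (\<Sum>x\<in>F. \<kappa> x *\<^sub>R x)"
    using dual_cone_extreme_decomposition[OF assms] by blast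
  define k where "k = (\<Sum>x\<in>F. \<kappa> x * support_function S x)"
  have support_pos: "0 < support_function S x" if "x \<in> F" for x
    using F(2) that support_function_pos by (auto simp: extreme_point_of_def)
  have "0 \<le> k"
    unfolding k_def using F(3) support_pos by (intro sum_nonneg) (simp add: less_imp_le)
  moreover have "v \<bullet> s0 = lam0 * k"
    using F(2) extreme_point_inner_s0
    by (auto simp: v_sum k_def inner_sum_left sum_distrib_left intro!: sum.cong)
  moreover have "v \<bullet> s \<le> k" if "s \<in> S" for s
  proof -
    have "x \<bullet> s \<le> support_function S x" for x
      using support_function_attained[OF compact_S S_nonempty, of x] that by metis
    then show ?thesis
      unfolding v_sum k_def inner_sum_left using F(3)
      by (auto intro!: sum_mono mult_left_mono)
  qed
  ultimately show ?thesis
    using that by blast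
qed

lemma lam0_pos: "0 < lam0"
proof -
  obtain z where z: "z \<in> dual_cone S" "u = (\<lambda>v. z \<bullet> v)"
    using effect_unit by (auto simp: effect_iff_inner)
  obtain k where "0 \<le> k" "z \<bullet> s0 = lam0 * k"
    using dual_cone_bounded_at_s0[OF z(1)] by blast
  moreover have "z \<bullet> s0 = 1"
    using unit_eq_1[OF s0_in_S] by (simp add: z(2))
  ultimately have "0 < lam0 * k"
    by simp
  with \<open>0 \<le> k\<close> show ?thesis
    by (simp add: zero_less_mult_iff)
qed

lemma effect_le_at_s0:
  assumes "effect S e" "s \<in> S"
  shows "e s \<le> e s0 / lam0"
proof -
  obtain v where v: "v \<in> dual_cone S" "e = (\<lambda>x. v \<bullet> x)"
    using assms(1) by (auto simp: effect_iff_inner)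
  obtain k where "v \<bullet> s0 = lam0 * k" "v \<bullet> s \<le> k"
    using dual_cone_bounded_at_s0[OF v(1)] assms(2) by metis
  then show ?thesis
    using lam0_pos by (simp add: v(2))
qed

lemma fnorm_effect_le: "effect S e \<Longrightarrow> fnorm S e \<le> e s0 / lam0"
  by (rule fnorm_le[OF S_nonempty]) (simp add: effect_def effect_le_at_s0)

lemma fnorm_indecomposable_effect:
  assumes e: "indecomposable_effect S e"
  shows "fnorm S e = e s0 / lam0"
proof (rule antisym)
  have "effect S e"
    using e by (simp add: indecomposable_effect_def)
  then show "fnorm S e \<le> e s0 / lam0"
    by (rule fnorm_effect_le)
  obtain w b where w: "w extreme_point_of base" and "0 < b" and e_eq: "e = (\<lambda>v. b * (w \<bullet> v))"
    using indecomposable_effect_on_extreme_ray[OF e] by blast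
  obtain s1 where "s1 \<in> S" "support_function S w = w \<bullet> s1"
    using support_function_attained[OF compact_S S_nonempty] by blast
  then have "e s0 / lam0 = e s1"
    using extreme_point_inner_s0[OF w] lam0_pos by (simp add: e_eq)
  also have "\<dots> \<le> fnorm S e"
    by (rule effect_le_fnorm[OF \<open>effect S e\<close> \<open>s1 \<in> S\<close>])
  finally show "e s0 / lam0 \<le> fnorm S e" .
qed

lemma measurement_sum_at_s0: "measurement S u \<Omega> M \<Longrightarrow> (\<Sum>x\<in>\<Omega>. M x s0 / lam0) = 1 / lam0"
  by (simp add: measurement_def unit_eq_1[OF s0_in_S] flip: sum_divide_distrib)

lemma decoding_power_le:
  assumes "measurement S u \<Omega> M"
  shows "decoding_power S \<Omega> M \<le> 1 / lam0"
proof -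
  have "decoding_power S \<Omega> M \<le> (\<Sum>x\<in>\<Omega>. M x s0 / lam0)"
    unfolding decoding_power_def using assms by (intro sum_mono) (simp add: measurement_def fnorm_effect_le)
  also have "\<dots> = 1 / lam0"
    using assms by (rule measurement_sum_at_s0)
  finally show ?thesis .
qed

lemma decoding_power_indecomposable:
  assumes "indecomposable_measurement S u \<Omega> M"
  shows "decoding_power S \<Omega> M = 1 / lam0"
proof -
  have "fnorm S (M x) = M x s0 / lam0" if "x \<in> \<Omega>" for x
  proof (cases "M x = (\<lambda>_. 0)")
    case True
    then show ?thesis
      using S_nonempty by (simp add: fnorm_def)
  next
    case False
    with assms that show ?thesis
      by (simp add: indecomposable_measurement_def fnorm_indecomposable_effect)
  qed
  then have "decoding_power S \<Omega> M = (\<Sum>x\<in>\<Omega>. M x s0 / lam0)"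
    unfolding decoding_power_def by (rule sum.cong[OF refl])
  also have "\<dots> = 1 / lam0"
    using assms by (simp add: indecomposable_measurement_def measurement_sum_at_s0)
  finally show ?thesis .
qed

lemma info_storability_eq: "info_storability S u = 1 / lam0"
  unfolding info_storability_def
proof (rule cSup_eq_maximum)
  obtain F and M :: "'a \<Rightarrow> 'a \<Rightarrow> real" where M: "indecomposable_measurement S u F M"
    by (rule exists_indecomposable_measurement)
  then have "finite F"
    by (simp add: indecomposable_measurement_def measurement_def)
  then obtain h where h: "bij_betw h {0..<card F} F"
    using ex_bij_betw_nat_finite by blast
  have "indecomposable_measurement S u {0..<card F} (M \<circ> h)"
    by (rule indecomposable_measurement_reindex[OF h M])
  then show "1 / lam0 \<in> {decoding_power S \<Omega> M | (\<Omega> :: nat set) M. measurement S u \<Omega> M}"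
    using decoding_power_indecomposable by (force simp: indecomposable_measurement_def)
qed (auto intro: decoding_power_le)

end

theorem proposition3:
  fixes S :: "'a::euclidean_space set" and u :: "'a \<Rightarrow> real"
    and s0 :: 'a and lam0 :: real
  assumes "state_space S u"
    and "s0 \<in> S"
    and "\<forall>e. pure_effect S e \<and> indecomposable_effect S e \<longrightarrow> e s0 = lam0"
  shows "(\<forall>(\<Omega> :: 'b set) M. indecomposable_measurement S u \<Omega> M \<longrightarrow>
            decoding_power S \<Omega> M = 1 / lam0)
         \<and> info_storability S u = 1 / lam0"
proof -
  obtain B where B: "B \<subseteq> S" "independent B" "S \<subseteq> span B"
    by (rule basis_exists)
  have "span B = UNIV"
    using assms(1) span_mono[OF B(3)] by (auto simp: state_space_def span_span)
  then interpret uniform_pure_indecomposable S B u s0 lam0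
    using assms B finiteI_independent by unfold_locales auto
  show ?thesis
    using decoding_power_indecomposable info_storability_eq by blast
qed

end
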